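(* Let $G$ be a Borel groupoid with a Borel Haar system $\{\lambda^u\}_{u\in G^{(0)}}$. Let $\{Y_i\}_{i=1}^\infty$ be a countable cover of $G^{(0)}$ by invariant Borel subsets such that each reduction $G|_{Y_i}$ is Borel amenable. Then $G$ is Borel amenable.
   Context: All Borel spaces are analytic. A Borel Haar system is a family of measures $\lambda^u$ on $G^u=r^{-1}(u)$ with $u\mapsto\int f\,d\lambda^u$ Borel for nonnegative Borel $f$ and $\gamma\cdot\lambda^{s(\gamma)}=\lambda^{r(\gamma)}$. $Y\subset G^{(0)}$ is invariant if $s(\gamma)\in Y$ iff $r(\gamma)\in Y$; $G|_Y=\{\gamma: r(\gamma),s(\gamma)\in Y\}$. A Borel groupoid $H$ is Borel amenable if there is a sequence of Borel systems $\{m_n^u\}_{u\in H^{(0)}}$ of probability measures, $m_n^u$ supported on $H^u$, $u\mapsto\int f\,dm_n^u$ Borel for nonnegative Borel $f$, with $\|\gamma\cdot m_n^{s(\gamma)}-m_n^{r(\gamma)}\|_1\to0$ for all $\gamma\in H$. *)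

theory Defs
  imports "HOL-Probability.Probability"
begin

text \<open>A subset of the real line is analytic if it is empty or a continuous image of
  the Baire space (nat \<Rightarrow> nat, product topology of discrete spaces).\<close>
definition analytic_set_real :: "real set \<Rightarrow> bool" where
  "analytic_set_real A \<longleftrightarrow> A = {} \<or>
     (\<exists>g :: (nat \<Rightarrow> nat) \<Rightarrow> real. continuous_on UNIV g \<and> range g = A)"

definition analytic_borel_space :: "'a measure \<Rightarrow> bool" where
  "analytic_borel_space M \<longleftrightarrow>
     (\<exists>f A. analytic_set_real A \<and> bij_betw f (space M) A \<and>
        sets M = {f -` B \<inter> space M | B. B \<in> sets borel})"

text \<open>Arrows form the measurable space G; the unit space U is a subset of the arrows;
  r, s range, source; gmul composition (defined on pairs with s x = r y); ginv inverse.\<close>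
definition composable_pairs :: "'a measure \<Rightarrow> ('a \<Rightarrow> 'a) \<Rightarrow> ('a \<Rightarrow> 'a) \<Rightarrow> ('a \<times> 'a) set" where
  "composable_pairs G r s = {(x, y). x \<in> space G \<and> y \<in> space G \<and> s x = r y}"

definition borel_groupoid ::
  "'a measure \<Rightarrow> 'a set \<Rightarrow> ('a \<Rightarrow> 'a) \<Rightarrow> ('a \<Rightarrow> 'a) \<Rightarrow> ('a \<Rightarrow> 'a \<Rightarrow> 'a) \<Rightarrow> ('a \<Rightarrow> 'a) \<Rightarrow> bool"
where
  "borel_groupoid G U r s gmul ginv \<longleftrightarrow>
     analytic_borel_space G \<and>
     U \<in> sets G \<and>
     (\<forall>x\<in>space G. r x \<in> U \<and> s x \<in> U) \<and>
     (\<forall>u\<in>U. r u = u \<and> s u = u) \<and>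
     (\<forall>x\<in>space G. \<forall>y\<in>space G. s x = r y \<longrightarrow>
        gmul x y \<in> space G \<and> r (gmul x y) = r x \<and> s (gmul x y) = s y) \<and>
     (\<forall>x\<in>space G. \<forall>y\<in>space G. \<forall>z\<in>space G. s x = r y \<longrightarrow> s y = r z \<longrightarrow>
        gmul (gmul x y) z = gmul x (gmul y z)) \<and>
     (\<forall>x\<in>space G. gmul (r x) x = x \<and> gmul x (s x) = x) \<and>
     (\<forall>x\<in>space G. ginv x \<in> space G \<and> r (ginv x) = s x \<and> s (ginv x) = r x \<and>
        gmul x (ginv x) = r x \<and> gmul (ginv x) x = s x) \<and>
     r \<in> measurable G G \<and> s \<in> measurable G G \<and> ginv \<in> measurable G G \<and>
     (\<lambda>(x, y). gmul x y) \<in> measurable (restrict_space (G \<Otimes>\<^sub>M G) (composable_pairs G r s)) G"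

definition translate ::
  "'a measure \<Rightarrow> ('a \<Rightarrow> 'a) \<Rightarrow> ('a \<Rightarrow> 'a) \<Rightarrow> ('a \<Rightarrow> 'a \<Rightarrow> 'a) \<Rightarrow> 'a \<Rightarrow> 'a measure \<Rightarrow> 'a measure"
where
  "translate G r s gmul x \<mu> = measure_of (space G) (sets G)
     (\<lambda>A. emeasure \<mu> {y \<in> space G. r y = s x \<and> gmul x y \<in> A})"

definition tv_norm :: "'a measure \<Rightarrow> 'a measure \<Rightarrow> 'a measure \<Rightarrow> real" where
  "tv_norm G \<mu> \<nu> = (SUP P \<in> {P. finite P \<and> P \<subseteq> sets G \<and> disjoint P}.
       \<Sum>A\<in>P. \<bar>measure \<mu> A - measure \<nu> A\<bar>)"

definition borel_haar_system ::
  "'a measure \<Rightarrow> 'a set \<Rightarrow> ('a \<Rightarrow> 'a) \<Rightarrow> ('a \<Rightarrow> 'a) \<Rightarrow> ('a \<Rightarrow> 'a \<Rightarrow> 'a) \<Rightarrow> ('a \<Rightarrow> 'a measure) \<Rightarrow> bool"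
where
  "borel_haar_system G U r s gmul lam \<longleftrightarrow>
     (\<forall>u\<in>U. sets (lam u) = sets G \<and> emeasure (lam u) (space G - {x \<in> space G. r x = u}) = 0) \<and>
     (\<forall>f \<in> borel_measurable G. (\<lambda>u. \<integral>\<^sup>+ x. f x \<partial>lam u) \<in> borel_measurable (restrict_space G U)) \<and>
     (\<forall>x\<in>space G. translate G r s gmul x (lam (s x)) = lam (r x))"

definition invariant_set :: "'a measure \<Rightarrow> 'a set \<Rightarrow> ('a \<Rightarrow> 'a) \<Rightarrow> ('a \<Rightarrow> 'a) \<Rightarrow> 'a set \<Rightarrow> bool" where
  "invariant_set G U r s Y \<longleftrightarrow> Y \<subseteq> U \<and> (\<forall>x\<in>space G. s x \<in> Y \<longleftrightarrow> r x \<in> Y)"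

text \<open>Borel amenability of the reduction G|_Y = {x. r x \<in> Y \<and> s x \<in> Y}, with unit space Y.
  Measures on G|_Y are represented as measures on G supported on (G|_Y)^u.
  For Y = U this is Borel amenability of G itself.\<close>
definition borel_amenable_reduction ::
  "'a measure \<Rightarrow> ('a \<Rightarrow> 'a) \<Rightarrow> ('a \<Rightarrow> 'a) \<Rightarrow> ('a \<Rightarrow> 'a \<Rightarrow> 'a) \<Rightarrow> 'a set \<Rightarrow> bool"
where
  "borel_amenable_reduction G r s gmul Y \<longleftrightarrow>
     (\<exists>m :: nat \<Rightarrow> 'a \<Rightarrow> 'a measure.
        (\<forall>n. \<forall>u\<in>Y. prob_space (m n u) \<and> sets (m n u) = sets G \<and>
             emeasure (m n u) (space G - {x \<in> space G. r x = u \<and> s x \<in> Y}) = 0) \<and>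
        (\<forall>n. \<forall>f \<in> borel_measurable G.
             (\<lambda>u. \<integral>\<^sup>+ x. f x \<partial>m n u) \<in> borel_measurable (restrict_space G Y)) \<and>
        (\<forall>x\<in>space G. r x \<in> Y \<and> s x \<in> Y \<longrightarrow>
             (\<lambda>n. tv_norm G (translate G r s gmul x (m n (s x))) (m n (r x))) \<longlonglongrightarrow> 0))"

end

theory Submission
  imports Defs
begin

text \<open>Amenability glues along a countable invariant cover: the \<open>n\<close>-th approximate invariant mean
  at a unit \<open>u\<close> is taken from the first piece \<open>Y i\<close> containing \<open>u\<close>. Invariance makes the range and
  the source of every arrow lie in the same first piece, so the translation estimate of that piece
  applies, and measurability in \<open>u\<close> holds piecewise on the Borel sets
  \<open>Y i - (\<Union>j<i. Y j)\<close>.\<close>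

definition first_index :: "(nat \<Rightarrow> 'a set) \<Rightarrow> 'a \<Rightarrow> nat" where
  "first_index A u = (LEAST i. u \<in> A i)"

lemma first_index_mem: "u \<in> (\<Union>i. A i) \<Longrightarrow> u \<in> A (first_index A u)"
  unfolding first_index_def by (auto intro: LeastI)

lemma first_index_cong: "(\<And>i. u \<in> A i \<longleftrightarrow> v \<in> A i) \<Longrightarrow> first_index A u = first_index A v"
  unfolding first_index_def by simp

lemma first_index_level_set: "{u \<in> (\<Union>i. A i). first_index A u = i} = A i - (\<Union>j<i. A j)"
proof (intro set_eqI iffI)
  fix u assume "u \<in> {u \<in> (\<Union>i. A i). first_index A u = i}"
  then show "u \<in> A i - (\<Union>j<i. A j)"
    using first_index_mem[of u A] unfolding first_index_def by (auto dest: not_less_Least)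
next
  fix u assume u: "u \<in> A i - (\<Union>j<i. A j)"
  then have "first_index A u = i"
    unfolding first_index_def by (intro Least_equality) (auto simp: not_less[symmetric])
  with u show "u \<in> {u \<in> (\<Union>i. A i). first_index A u = i}" by blast
qed

lemma measurable_first_index_patch:
  assumes sets: "\<And>i. A i \<in> sets M"
    and meas: "\<And>i. f i \<in> measurable (restrict_space M (A i)) N"
  shows "(\<lambda>u. f (first_index A u) u) \<in> measurable (restrict_space M (\<Union>i. A i)) N"
proof (rule measurable_piecewise_restrict[where C = "range (\<lambda>i. A i - (\<Union>j<i. A j))"])
  have UN_sets: "(\<Union>i. A i) \<in> sets M" using sets by auto
  have level_sets: "A i - (\<Union>j<i. A j) \<in> sets M" for i using sets by auto
  show "countable (range (\<lambda>i. A i - (\<Union>j<i. A j)))" by simp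
  show "\<Omega> \<inter> space (restrict_space M (\<Union>i. A i)) \<in> sets (restrict_space M (\<Union>i. A i))"
    if "\<Omega> \<in> range (\<lambda>i. A i - (\<Union>j<i. A j))" for \<Omega>
    using that level_sets UN_sets by (auto simp: space_restrict_space sets_restrict_space_iff)
  show "space (restrict_space M (\<Union>i. A i)) \<subseteq> \<Union> (range (\<lambda>i. A i - (\<Union>j<i. A j)))"
    using first_index_level_set[of A] by (auto simp: space_restrict_space)
  show "(\<lambda>u. f (first_index A u) u)
      \<in> measurable (restrict_space (restrict_space M (\<Union>i. A i)) \<Omega>) N"
    if "\<Omega> \<in> range (\<lambda>i. A i - (\<Union>j<i. A j))" for \<Omega>
  proof -
    from that obtain i where \<Omega>: "\<Omega> = A i - (\<Union>j<i. A j)" by blast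
    have "(\<Union>i. A i) \<inter> \<Omega> = \<Omega>" using \<Omega> by blast
    then have "restrict_space (restrict_space M (\<Union>i. A i)) \<Omega> = restrict_space M \<Omega>"
      using restrict_restrict_space[of "\<Union>i. A i" M \<Omega>] UN_sets level_sets[of i] \<Omega>
      by (simp add: sets.Int_space_eq2)
    moreover have "f i \<in> measurable (restrict_space M \<Omega>) N"
      by (rule measurable_restrict_mono[OF meas]) (simp add: \<Omega>)
    moreover have "first_index A u = i" if "u \<in> \<Omega>" for u
      using that first_index_level_set[of A i] unfolding \<Omega> by blast
    ultimately show ?thesis
      by (auto intro: measurable_cong[THEN iffD1] simp: space_restrict_space)
  qed
qed

definition approximate_invariant_means ::
  "'a measure \<Rightarrow> ('a \<Rightarrow> 'a) \<Rightarrow> ('a \<Rightarrow> 'a) \<Rightarrow> ('a \<Rightarrow> 'a \<Rightarrow> 'a) \<Rightarrow> 'a set \<Rightarrow> (nat \<Rightarrow> 'a \<Rightarrow> 'a measure) \<Rightarrow> bool"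
where
  "approximate_invariant_means G r s gmul Y m \<longleftrightarrow>
     (\<forall>n. \<forall>u\<in>Y. prob_space (m n u) \<and> sets (m n u) = sets G \<and>
          emeasure (m n u) (space G - {x \<in> space G. r x = u \<and> s x \<in> Y}) = 0) \<and>
     (\<forall>n. \<forall>f \<in> borel_measurable G.
          (\<lambda>u. \<integral>\<^sup>+ x. f x \<partial>m n u) \<in> borel_measurable (restrict_space G Y)) \<and>
     (\<forall>x\<in>space G. r x \<in> Y \<and> s x \<in> Y \<longrightarrow>
          (\<lambda>n. tv_norm G (translate G r s gmul x (m n (s x))) (m n (r x))) \<longlonglongrightarrow> 0)"

lemma borel_amenable_reduction_iff_approximate_invariant_means:
  "borel_amenable_reduction G r s gmul Y \<longleftrightarrow> (\<exists>m. approximate_invariant_means G r s gmul Y m)"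
  unfolding borel_amenable_reduction_def approximate_invariant_means_def by simp

lemma borel_amenable_reduction_UN:
  fixes Y :: "nat \<Rightarrow> 'a set"
  assumes sets: "\<And>i. Y i \<in> sets G"
    and invariant: "\<And>i x. x \<in> space G \<Longrightarrow> s x \<in> Y i \<longleftrightarrow> r x \<in> Y i"
    and amenable: "\<And>i. borel_amenable_reduction G r s gmul (Y i)"
  shows "borel_amenable_reduction G r s gmul (\<Union>i. Y i)"
proof -
  have "\<forall>i. \<exists>m. approximate_invariant_means G r s gmul (Y i) m"
    using amenable borel_amenable_reduction_iff_approximate_invariant_means by blast
  then obtain M where "\<And>i. approximate_invariant_means G r s gmul (Y i) (M i)"
    by (metis choice)
  then have
    prob: "\<And>i n u. u \<in> Y i \<Longrightarrow> prob_space (M i n u) \<and> sets (M i n u) = sets G \<and>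
        emeasure (M i n u) (space G - {x \<in> space G. r x = u \<and> s x \<in> Y i}) = 0" and
    meas: "\<And>i n f. f \<in> borel_measurable G \<Longrightarrow>
        (\<lambda>u. \<integral>\<^sup>+ x. f x \<partial>M i n u) \<in> borel_measurable (restrict_space G (Y i))" and
    conv: "\<And>i x. x \<in> space G \<Longrightarrow> r x \<in> Y i \<Longrightarrow> s x \<in> Y i \<Longrightarrow>
        (\<lambda>n. tv_norm G (translate G r s gmul x (M i n (s x))) (M i n (r x))) \<longlonglongrightarrow> 0"
    unfolding approximate_invariant_means_def by blast+
  define m where "m n u = M (first_index Y u) n u" for n u
  have first_index_rs: "first_index Y (r x) = first_index Y (s x)" if "x \<in> space G" for x
    using invariant[OF that] by (intro first_index_cong) simp
  show ?thesis
    unfolding borel_amenable_reduction_iff_approximate_invariant_means approximate_invariant_means_def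
  proof (intro exI[of _ m] conjI ballI allI impI)
    fix n u assume u: "u \<in> (\<Union>i. Y i)"
    let ?i = "first_index Y u"
    have "{x \<in> space G. r x = u \<and> s x \<in> Y ?i} = {x \<in> space G. r x = u \<and> s x \<in> (\<Union>i. Y i)}"
      using invariant[of _ ?i] first_index_mem[OF u] by auto
    then show "prob_space (m n u)" "sets (m n u) = sets G"
      "emeasure (m n u) (space G - {x \<in> space G. r x = u \<and> s x \<in> (\<Union>i. Y i)}) = 0"
      using prob[OF first_index_mem[OF u]] unfolding m_def by auto
  next
    fix n and f :: "'a \<Rightarrow> ennreal" assume "f \<in> borel_measurable G"
    then show "(\<lambda>u. \<integral>\<^sup>+ x. f x \<partial>m n u) \<in> borel_measurable (restrict_space G (\<Union>i. Y i))"
      unfolding m_def by (intro measurable_first_index_patch sets meas)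
  next
    fix x assume x: "x \<in> space G" and "r x \<in> (\<Union>i. Y i) \<and> s x \<in> (\<Union>i. Y i)"
    then have "r x \<in> Y (first_index Y (r x))"
      using first_index_mem[of "r x" Y] by blast
    moreover from this have "s x \<in> Y (first_index Y (r x))"
      using invariant[OF x] by simp
    ultimately show "(\<lambda>n. tv_norm G (translate G r s gmul x (m n (s x))) (m n (r x))) \<longlonglongrightarrow> 0"
      using conv[OF x] unfolding m_def first_index_rs[OF x] by simp
  qed
qed

theorem lemma3p3:
  fixes G :: "'a measure" and U :: "'a set" and r s ginv :: "'a \<Rightarrow> 'a"
    and gmul :: "'a \<Rightarrow> 'a \<Rightarrow> 'a" and lam :: "'a \<Rightarrow> 'a measure" and Y :: "nat \<Rightarrow> 'a set"
  assumes "borel_groupoid G U r s gmul ginv"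
    and "borel_haar_system G U r s gmul lam"
    and "\<And>i. Y i \<in> sets G"
    and "\<And>i. invariant_set G U r s (Y i)"
    and "(\<Union>i. Y i) = U"
    and "\<And>i. borel_amenable_reduction G r s gmul (Y i)"
  shows "borel_amenable_reduction G r s gmul U"
proof -
  have "borel_amenable_reduction G r s gmul (\<Union>i. Y i)"
  proof (rule borel_amenable_reduction_UN[OF assms(3) _ assms(6)])
    fix i x assume "x \<in> space G"
    then show "s x \<in> Y i \<longleftrightarrow> r x \<in> Y i"
      using assms(4)[of i] by (simp add: invariant_set_def)
  qed
  with assms(5) show ?thesis by simp
qed

end
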